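(* For a nonzero $\vec v\in\mathbb{C}^3$, let $I_{\langle\vec v\rangle}\in SU(3)$ be the unique element having $\langle\vec v\rangle$ as its $+1$-eigenspace and the Hermitian orthogonal complement $\langle\vec v\rangle^\perp$ as its $-1$-eigenspace (the geodesic inversion of $\mathbb{C}P(2)$ at $\langle\vec v\rangle$). For nonzero $\vec v,\vec w\in\mathbb{C}^3$, the composition $I_{\langle\vec v\rangle}I_{\langle\vec w\rangle}$ is a geodesic inversion (i.e. equals $I_{\langle\vec u\rangle}$ for some nonzero $\vec u$) if and only if $\vec v$ and $\vec w$ are Hermitian orthogonal.
   Context: The geodesic inversions are exactly the elements of $SU(3)$ of trace $-1$. *)

theory Defs
  imports "HOL-Analysis.Analysis"
begin

definition herm_inner :: "complex ^ 3 \<Rightarrow> complex ^ 3 \<Rightarrow> complex" where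
  "herm_inner v w = (\<Sum>i\<in>UNIV. cnj (v $ i) * w $ i)"

definition conj_transpose :: "complex ^ 3 ^ 3 \<Rightarrow> complex ^ 3 ^ 3" where
  "conj_transpose A = (\<chi> i j. cnj (A $ j $ i))"

definition SU3 :: "(complex ^ 3 ^ 3) set" where
  "SU3 = {A. A ** conj_transpose A = mat 1 \<and> det A = 1}"

definition geod_inv :: "complex ^ 3 \<Rightarrow> complex ^ 3 ^ 3" where
  "geod_inv v = (THE M. M \<in> SU3 \<and>
      {x. M *v x = x} = range (\<lambda>c::complex. c *s v) \<and>
      {x. M *v x = - x} = {x. herm_inner v x = 0})"

end

theory Submission
  imports Defs
begin

text \<open>The geodesic inversion at \<open>\<langle>v\<rangle>\<close> is \<open>I\<^sub>v = 2 v v\<^sup>* / \<langle>v,v\<rangle> - 1\<close>, so every geodesic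
  inversion has trace \<open>-1\<close>, whereas \<open>tr (I\<^sub>v I\<^sub>w) = 4 |\<langle>v,w\<rangle>|\<^sup>2 / (\<langle>v,v\<rangle> \<langle>w,w\<rangle>) - 1\<close>;
  hence a product of two inversions can only be an inversion if \<open>\<langle>v,w\<rangle> = 0\<close>. Conversely,
  for orthogonal \<open>v, w\<close> the conjugated cross product \<open>u\<close> completes them to an orthogonal
  basis, and \<open>I\<^sub>v I\<^sub>w\<close> fixes \<open>u\<close> and negates \<open>v\<close> and \<open>w\<close>, i.e. \<open>I\<^sub>v I\<^sub>w = I\<^sub>u\<close>.\<close>

lemma herm_inner_3: "herm_inner v w = cnj (v$1) * w$1 + cnj (v$2) * w$2 + cnj (v$3) * w$3"
  by (simp add: herm_inner_def sum_3)

lemma herm_inner_smult_right: "herm_inner v (c *s x) = c * herm_inner v x"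
  by (simp add: herm_inner_3 algebra_simps)

lemma herm_inner_diff_right: "herm_inner v (x - y) = herm_inner v x - herm_inner v y"
  by (simp add: herm_inner_3 algebra_simps)

lemma cnj_herm_inner: "cnj (herm_inner v w) = herm_inner w v"
  by (simp add: herm_inner_3 algebra_simps)

lemma herm_inner_self_eq_0_iff: "herm_inner v v = 0 \<longleftrightarrow> v = 0"
proof
  assume "herm_inner v v = 0"
  moreover have "herm_inner v v = of_real (\<Sum>i\<in>UNIV. (cmod (v$i))\<^sup>2)"
    unfolding herm_inner_def of_real_sum by (simp only: complex_norm_square mult.commute)
  ultimately have "(\<Sum>i\<in>UNIV. (cmod (v$i))\<^sup>2) = 0"
    by (simp only: of_real_eq_0_iff)
  then have "\<forall>i\<in>UNIV. (cmod (v$i))\<^sup>2 = 0"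
    by (simp add: sum_nonneg_eq_0_iff)
  then show "v = 0" by (simp add: vec_eq_iff)
qed (simp add: herm_inner_def)

text \<open>The scalar \<open>k\<close> is kept abstract so that the coordinate computations stay polynomial;
  the inversion takes \<open>k = 2 / \<langle>v,v\<rangle>\<close>.\<close>
definition outer_minus_id :: "complex \<Rightarrow> complex ^ 3 \<Rightarrow> complex ^ 3 ^ 3" where
  "outer_minus_id k v = (\<chi> i j. k * (v $ i * cnj (v $ j)) - (if i = j then 1 else 0))"

lemma outer_minus_id_mult_vector:
  "outer_minus_id k v *v x = (k * herm_inner v x) *s v - x"
  by (simp add: outer_minus_id_def matrix_vector_mult_def vec_eq_iff sum_3 herm_inner_3 forall_3)
    (simp add: algebra_simps)

lemma conj_transpose_outer_minus_id:
  "cnj k = k \<Longrightarrow> conj_transpose (outer_minus_id k v) = outer_minus_id k v"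
  by (auto simp: conj_transpose_def outer_minus_id_def vec_eq_iff mult.commute)

lemma det_outer_minus_id: "det (outer_minus_id k v) = k * herm_inner v v - 1"
  by (simp add: outer_minus_id_def det_3 herm_inner_3) algebra

lemma trace_outer_minus_id: "trace (outer_minus_id k v) = k * herm_inner v v - 3"
  by (simp add: outer_minus_id_def trace_def sum_3 herm_inner_3) algebra

lemma trace_outer_minus_id_mult:
  "trace (outer_minus_id k v ** outer_minus_id l w) =
     k * l * herm_inner v w * herm_inner w v - k * herm_inner v v - l * herm_inner w w + 3"
  by (simp add: outer_minus_id_def trace_def matrix_matrix_mult_def sum_3 herm_inner_3) algebra

definition inversion :: "complex ^ 3 \<Rightarrow> complex ^ 3 ^ 3" where
  "inversion v = outer_minus_id (2 / herm_inner v v) v"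

lemma inversion_mult_vector:
  "inversion v *v x = (2 * herm_inner v x / herm_inner v v) *s v - x"
  by (simp add: inversion_def outer_minus_id_mult_vector)

lemma inversion_mult_self:
  assumes "v \<noteq> 0" shows "inversion v ** inversion v = mat 1"
proof (rule iffD2[OF matrix_eq], rule allI)
  fix x :: "complex ^ 3"
  have "herm_inner v v \<noteq> 0" using assms by (simp add: herm_inner_self_eq_0_iff)
  then show "(inversion v ** inversion v) *v x = mat 1 *v x"
    by (simp add: matrix_vector_mul_assoc[symmetric] inversion_mult_vector herm_inner_diff_right
        herm_inner_smult_right vec_eq_iff field_simps)
qed

lemma inversion_in_SU3:
  assumes "v \<noteq> 0" shows "inversion v \<in> SU3"
proof -
  have "herm_inner v v \<noteq> 0" using assms by (simp add: herm_inner_self_eq_0_iff)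
  moreover have "conj_transpose (inversion v) = inversion v"
    unfolding inversion_def by (rule conj_transpose_outer_minus_id) (simp add: cnj_herm_inner)
  ultimately show ?thesis
    using inversion_mult_self[OF assms] by (simp add: SU3_def inversion_def det_outer_minus_id)
qed

lemma inversion_fixed_vectors:
  assumes "v \<noteq> 0" shows "{x. inversion v *v x = x} = range (\<lambda>c::complex. c *s v)"
proof -
  have nz: "herm_inner v v \<noteq> 0" using assms by (simp add: herm_inner_self_eq_0_iff)
  have "(2 * c) *s v - x = x \<longleftrightarrow> x = c *s v" for c and x :: "complex ^ 3"
    by (simp add: vec_eq_iff) (metis add_diff_cancel_left' diff_add_cancel mult_2 mult.assoc)
  then have "inversion v *v x = x \<longleftrightarrow> x = (herm_inner v x / herm_inner v v) *s v" for x
    by (metis inversion_mult_vector times_divide_eq_right)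
  moreover have "inversion v *v (c *s v) = c *s v" for c
    using nz by (simp add: inversion_mult_vector herm_inner_smult_right vec_eq_iff field_simps)
  ultimately show ?thesis by blast
qed

lemma inversion_negated_vectors:
  assumes "v \<noteq> 0" shows "{x. inversion v *v x = - x} = {x. herm_inner v x = 0}"
proof -
  have "herm_inner v v \<noteq> 0" using assms by (simp add: herm_inner_self_eq_0_iff)
  then have "inversion v *v x = - x \<longleftrightarrow> herm_inner v x = 0" for x
    using assms by (simp add: inversion_mult_vector)
  then show ?thesis by blast
qed

lemma eq_if_same_eigenspaces:
  fixes M N :: "complex ^ 3 ^ 3"
  assumes "v \<noteq> 0"
    and "\<And>c. M *v (c *s v) = c *s v \<and> N *v (c *s v) = c *s v"
    and "\<And>x. herm_inner v x = 0 \<Longrightarrow> M *v x = - x \<and> N *v x = - x"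
  shows "M = N"
proof (rule iffD2[OF matrix_eq], rule allI)
  fix x :: "complex ^ 3"
  define c where "c = herm_inner v x / herm_inner v v"
  have "herm_inner v v \<noteq> 0" using assms(1) by (simp add: herm_inner_self_eq_0_iff)
  then have "herm_inner v (x - c *s v) = 0"
    by (simp add: c_def herm_inner_diff_right herm_inner_smult_right)
  then have "M *v (c *s v) + M *v (x - c *s v) = N *v (c *s v) + N *v (x - c *s v)"
    using assms(2,3) by simp
  then show "M *v x = N *v x" by (simp add: matrix_vector_right_distrib[symmetric])
qed

lemma geod_inv_eq_inversion:
  assumes "v \<noteq> 0" shows "geod_inv v = inversion v"
  unfolding geod_inv_def
proof (rule the_equality)
  show "inversion v \<in> SU3 \<and> {x. inversion v *v x = x} = range (\<lambda>c::complex. c *s v) \<and>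
      {x. inversion v *v x = - x} = {x. herm_inner v x = 0}"
    using inversion_in_SU3 inversion_fixed_vectors inversion_negated_vectors assms by blast
next
  fix M assume "M \<in> SU3 \<and> {x. M *v x = x} = range (\<lambda>c::complex. c *s v) \<and>
      {x. M *v x = - x} = {x. herm_inner v x = 0}"
  then show "M = inversion v"
    using eq_if_same_eigenspaces[OF assms, of M "inversion v"]
      inversion_fixed_vectors[OF assms] inversion_negated_vectors[OF assms] by blast
qed

definition conj_cross :: "complex ^ 3 \<Rightarrow> complex ^ 3 \<Rightarrow> complex ^ 3" where
  "conj_cross v w = vector [cnj (v$2 * w$3 - v$3 * w$2), cnj (v$3 * w$1 - v$1 * w$3),
                            cnj (v$1 * w$2 - v$2 * w$1)]"

lemma herm_inner_conj_cross_self: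
  "herm_inner (conj_cross v w) (conj_cross v w) =
     herm_inner v v * herm_inner w w - herm_inner v w * herm_inner w v"
  by (simp add: conj_cross_def herm_inner_3) algebra

lemma orthogonal_resolution_conj_cross:
  assumes "herm_inner v w = 0"
  shows "(herm_inner v v * herm_inner w w) *s x =
     (herm_inner w w * herm_inner v x) *s v + (herm_inner v v * herm_inner w x) *s w
     + herm_inner (conj_cross v w) x *s conj_cross v w"
proof -
  have "cnj (v$1) * w$1 + cnj (v$2) * w$2 + cnj (v$3) * w$3 = 0"
    using assms by (simp add: herm_inner_3)
  moreover from arg_cong[OF this, of cnj]
  have "v$1 * cnj (w$1) + v$2 * cnj (w$2) + v$3 * cnj (w$3) = 0" by simp
  ultimately show ?thesis
    unfolding vec_eq_iff forall_3 by (simp add: conj_cross_def herm_inner_3) algebra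
qed

lemma inversion_mult_orthogonal:
  assumes "v \<noteq> 0" "w \<noteq> 0" "herm_inner v w = 0"
  shows "conj_cross v w \<noteq> 0" and "inversion v ** inversion w = inversion (conj_cross v w)"
proof -
  have nz: "herm_inner v v \<noteq> 0" "herm_inner w w \<noteq> 0"
    using assms(1,2) by (simp_all add: herm_inner_self_eq_0_iff)
  have u: "herm_inner (conj_cross v w) (conj_cross v w) = herm_inner v v * herm_inner w w"
    using assms(3) by (simp add: herm_inner_conj_cross_self)
  then show "conj_cross v w \<noteq> 0" using nz by (metis herm_inner_self_eq_0_iff mult_eq_0_iff)
  show "inversion v ** inversion w = inversion (conj_cross v w)"
  proof (rule iffD2[OF matrix_eq], rule allI)
    fix x :: "complex ^ 3"
    have "(inversion v ** inversion w) *v x = inversion v *v (inversion w *v x)"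
      by (simp add: matrix_vector_mul_assoc)
    also have "\<dots> = inversion (conj_cross v w) *v x"
      using nz orthogonal_resolution_conj_cross[OF assms(3), of x]
      unfolding inversion_mult_vector herm_inner_diff_right herm_inner_smult_right assms(3) u
      by (simp add: vec_eq_iff field_simps)
    finally show "(inversion v ** inversion w) *v x = inversion (conj_cross v w) *v x" .
  qed
qed

lemma trace_inversion:
  assumes "v \<noteq> 0" shows "trace (inversion v) = - 1"
  using assms by (simp add: inversion_def trace_outer_minus_id herm_inner_self_eq_0_iff)

lemma trace_inversion_mult:
  assumes "v \<noteq> 0" "w \<noteq> 0"
  shows "trace (inversion v ** inversion w) =
    4 * (herm_inner v w * cnj (herm_inner v w)) / (herm_inner v v * herm_inner w w) - 1"
  using assms
  by (simp add: inversion_def trace_outer_minus_id_mult herm_inner_self_eq_0_iff cnj_herm_inner)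

theorem lemma2p4:
  fixes v w :: "complex ^ 3"
  assumes "v \<noteq> 0" and "w \<noteq> 0"
  shows "(\<exists>u::complex ^ 3. u \<noteq> 0 \<and> geod_inv v ** geod_inv w = geod_inv u)
         \<longleftrightarrow> herm_inner v w = 0"
proof
  assume "\<exists>u. u \<noteq> 0 \<and> geod_inv v ** geod_inv w = geod_inv u"
  then obtain u where "u \<noteq> 0" "inversion v ** inversion w = inversion u"
    using assms by (auto simp: geod_inv_eq_inversion)
  then have "trace (inversion v ** inversion w) = - 1"
    by (simp add: trace_inversion)
  then have "herm_inner v w * cnj (herm_inner v w) = 0"
    using assms by (simp add: trace_inversion_mult herm_inner_self_eq_0_iff)
  then show "herm_inner v w = 0" by simp
next
  assume "herm_inner v w = 0"
  with assms show "\<exists>u. u \<noteq> 0 \<and> geod_inv v ** geod_inv w = geod_inv u"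
    by (metis geod_inv_eq_inversion inversion_mult_orthogonal)
qed

end
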